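(* Consider the inexact version of EDANNI described in the context, and assume: (A1) bounded delay: there is an integer $\tau\ge0$ such that for every $i\in[m]$ and $t\ge0$, $i\in\mathcal{A}_t\cup\cdots\cup\mathcal{A}_{\max\{t-\tau,0\}}$; (A2) each $\mathcal{L}_j$ is differentiable with $L$-Lipschitz gradient; (A3) each $\mathcal{L}_j$ is strongly convex with modulus $\sigma^2>0$: $\mathcal{L}_j(x)\ge\mathcal{L}_j(y)+\langle\nabla\mathcal{L}_j(y),x-y\rangle+\frac{\sigma^2}{2}\|x-y\|^2$ for all $x,y$; (A5) there is a constant $c_1>0$ with $\|\epsilon^t\|^2<c_1\|x^t-x^{t-1}\|^2$ for all $t>0$. Let $\delta>0$ and $\delta_1>(2L+\rho+1)/\sigma^2$, set $D:=\frac{\rho}{2}(1+\delta_1)+\delta_1$ and $\eta:=1+\frac1D$, and suppose $\frac{\delta_1L+\frac{\rho}{2}(1+\delta_1)+\frac12}{D}+\frac{3L}{2}-\frac{\rho-1}{2}+L\delta\tau<0$ and $\frac{\delta_1L+\frac{\rho}{2}(1+\delta_1)+\frac12}{D}+\frac{3L}{2}-\frac{\rho-1}{2}+L\delta\tau-\frac{(\rho-c_1)\eta}{2}+\Big(\frac{L}{\delta}+\frac{\frac{\delta_1}{2}L^2\tau}{D}\Big)\frac{\eta^\tau-1}{\eta-1}+\frac{c_1\eta}{D}<0.$ Then the sequence generated by inexact EDANNI satisfies, for all $t\ge0$, $0\le F(x^{t+1},x^t)-F(x^*,x^* )\le\frac{1}{\eta^t}\big(F(x^1,x^0)-F(x^*,x^*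 )\big).$
   Context: Problem setting: integers $m\ge 2$, $n\ge1$, $p\ge1$. For $j\in[m]$, $i\in[n]$, $l_{ji}:\mathbb{R}^p\to\mathbb{R}$ are smooth loss functions; $h:\mathbb{R}^p\to\mathbb{R}\cup\{+\infty\}$ is proper, lower semicontinuous and convex. $\mathcal{L}_j(x)=\frac1n\sum_{i}l_{ji}(x)$, $\mathcal{L}(x)=\frac1m\sum_j\mathcal{L}_j(x)+h(x)$, and $x^*$ is the minimizer of $\mathcal{L}$. Machine 1 is the master. Inexact EDANNI: given $x^0$ and $\rho\ge0$, at each iteration $t=0,1,\dots$ there is a set $\mathcal{A}_t\subseteq[m]$ of machines whose gradients arrive at iteration $t$, with $\mathcal{A}_0=[m]$; $t_j$ is the latest iteration $s\le t$ with $j\in\mathcal{A}_s$ (with $t_1=t$). The master computes $x^{t+1}$ such that for some error vector $\epsilon^t$, $\epsilon^t\in\nabla\mathcal{L}_1(x^{t+1})+\frac1m\sum_{j\in[m]}\nabla\mathcal{L}_j(x^{t_j})-\nabla\mathcal{L}_1(x^{t_1})+\partial h(x^{t+1})+\rho(x^{t+1}-x^t).$ Define $F(x,y)=\frac1m\sum_{j\in[m]}\mathcal{L}_j(x)+\frac{\rho}{2}\|x-y\|^2+h(x)$, so $F(x^*,x^* )=\mathcal{L}(x^* )$. *)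

theory Defs
  imports "HOL-Analysis.Analysis"
begin

(* Smoothness (C^infinity) of a real-valued function on a Euclidean space:
   it is continuous and all its partial derivatives exist and are again smooth
   (greatest fixed point, i.e. partial derivatives of every order exist and are continuous). *)
coinductive smooth_fun :: "('a::euclidean_space \<Rightarrow> real) \<Rightarrow> bool" where
  "continuous_on UNIV f \<Longrightarrow>
   (\<forall>b\<in>Basis. \<exists>g. (\<forall>x. ((\<lambda>s. f (x + s *\<^sub>R b)) has_real_derivative g x) (at 0)) \<and> smooth_fun g)
   \<Longrightarrow> smooth_fun f"

definition proper_fun :: "('a \<Rightarrow> ereal) \<Rightarrow> bool" where
  "proper_fun h \<longleftrightarrow> (\<forall>x. h x \<noteq> -\<infinity>) \<and> (\<exists>x. h x \<noteq> \<infinity>)"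

definition lsc_fun :: "('a::topological_space \<Rightarrow> ereal) \<Rightarrow> bool" where
  "lsc_fun h \<longleftrightarrow> (\<forall>c. closed {x. h x \<le> c})"

definition convex_fun :: "('a::real_vector \<Rightarrow> ereal) \<Rightarrow> bool" where
  "convex_fun h \<longleftrightarrow> (\<forall>x y u. 0 \<le> u \<and> u \<le> 1 \<longrightarrow>
      h ((1 - u) *\<^sub>R x + u *\<^sub>R y) \<le> ereal (1 - u) * h x + ereal u * h y)"

definition subdiff :: "('a::real_inner \<Rightarrow> ereal) \<Rightarrow> 'a \<Rightarrow> 'a set" where
  "subdiff h x = {g. h x \<noteq> \<infinity> \<and> (\<forall>y. h y \<ge> h x + ereal (inner g (y - x)))}"

(* t_j: latest iteration s \<le> t with j \<in> A s; for the master (j = 1), t_1 = t *)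
definition tlast :: "(nat \<Rightarrow> nat set) \<Rightarrow> nat \<Rightarrow> nat \<Rightarrow> nat" where
  "tlast A j t = (if j = 1 then t else (GREATEST s. s \<le> t \<and> j \<in> A s))"

end

theory Submission
  imports Defs
begin

text \<open>
  Let Psi = (1/m) sum_j L_j + h, so that Phi_t = F(x^(t+1), x^t) - F(xstar, xstar) equals
  Psi(x^(t+1)) - Psi(xstar) + rho/2 |x^(t+1) - x^t|^2. The master's optimality condition says that
  eps^t - e^t - rho (x^(t+1) - x^t) is a subgradient of the sigma^2-strongly convex Psi at x^(t+1),
  where e^t is the error of the master's gradient estimate caused by stale gradients. Evaluating
  strong convexity at x^t and at xstar, and bounding e^t via the Lipschitz gradients by the steps
  a_k = |x^(k+1) - x^k|^2 inside the delay window, gives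
  eta Phi_(t+1) - Phi_t <= X a_(t+1) + Y a_t + Z (a_(t+1-tau) + ... + a_t).
  The two parameter conditions make X <= 0 and Y + (1 + eta + ... + eta^(tau-1)) Z <= 0; after
  weighting by eta^t and summing, the window terms are absorbed and eta^t Phi_t <= Phi_0 remains.
\<close>

lemma mult_le_weighted_squares:
  fixes x y c :: real
  assumes "c > 0"
  shows "x * y \<le> c / 2 * x\<^sup>2 + y\<^sup>2 / (2 * c)"
proof -
  have "0 \<le> (c * x - y)\<^sup>2" by simp
  then have "2 * c * (x * y) \<le> c\<^sup>2 * x\<^sup>2 + y\<^sup>2"
    by (simp add: power2_eq_square algebra_simps)
  with assms show ?thesis
    by (simp add: field_simps power2_eq_square)
qed

lemma power2_add_le_weighted:
  fixes x y c :: real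
  assumes "c > 0"
  shows "(x + y)\<^sup>2 \<le> (1 + c) * x\<^sup>2 + (1 + 1 / c) * y\<^sup>2"
proof -
  have "x * y \<le> c / 2 * x\<^sup>2 + y\<^sup>2 / (2 * c)"
    using mult_le_weighted_squares[OF assms] .
  with assms show ?thesis
    by (simp add: power2_eq_square field_simps)
qed

lemma norm_diff_le_sum_increments:
  fixes x :: "nat \<Rightarrow> 'a::real_normed_vector"
  assumes "s \<le> t"
  shows "norm (x t - x s) \<le> (\<Sum>k=s..<t. norm (x (Suc k) - x k))"
  using norm_sum[of "\<lambda>k. x (Suc k) - x k" "{s..<t}"] sum_Suc_diff'[OF assms, of x] by simp

lemma sum_delay_window_squared_le:
  fixes b :: "nat \<Rightarrow> real"
  shows "(\<Sum>k=t - \<tau>..<t. b k)\<^sup>2 \<le> \<tau> * (\<Sum>k=t - \<tau>..<t. (b k)\<^sup>2)"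
proof -
  have "(\<Sum>k=t - \<tau>..<t. b k)\<^sup>2 \<le> (\<Sum>k=t - \<tau>..<t. (b k)\<^sup>2) * card {t - \<tau>..<t}"
    by (rule sum_squared_le_sum_of_squares)
  also have "\<dots> \<le> (\<Sum>k=t - \<tau>..<t. (b k)\<^sup>2) * \<tau>"
    by (intro mult_left_mono sum_nonneg) auto
  finally show ?thesis
    by (simp add: mult.commute)
qed

lemma mult_sum_delay_window_le:
  fixes b :: "nat \<Rightarrow> real" and c \<delta> :: real
  assumes "\<delta> > 0"
  shows "c * (\<Sum>k=t - \<tau>..<t. b k) \<le> \<tau> * \<delta> / 2 * c\<^sup>2 + (\<Sum>k=t - \<tau>..<t. (b k)\<^sup>2) / (2 * \<delta>)"
proof -
  have "c * (\<Sum>k=t - \<tau>..<t. b k) \<le> (\<Sum>k=t - \<tau>..<t. \<delta> / 2 * c\<^sup>2 + (b k)\<^sup>2 / (2 * \<delta>))"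
    unfolding sum_distrib_left using mult_le_weighted_squares[OF assms] by (intro sum_mono) auto
  also have "\<dots> = card {t - \<tau>..<t} * (\<delta> / 2 * c\<^sup>2) + (\<Sum>k=t - \<tau>..<t. (b k)\<^sup>2) / (2 * \<delta>)"
    by (simp add: sum.distrib sum_divide_distrib)
  also have "\<dots> \<le> \<tau> * (\<delta> / 2 * c\<^sup>2) + (\<Sum>k=t - \<tau>..<t. (b k)\<^sup>2) / (2 * \<delta>)"
    using assms by (intro add_right_mono mult_right_mono) auto
  finally show ?thesis
    by (simp add: algebra_simps)
qed

lemma sum_delay_window_swap:
  fixes a :: "nat \<Rightarrow> real" and \<eta> :: real
  assumes a_nonneg: "\<And>k. a k \<ge> 0" and "\<eta> \<ge> 0"
  shows "(\<Sum>t<T. \<eta> ^ t * (\<Sum>k=Suc t - \<tau>..<Suc t. a k)) \<le> (\<Sum>i<\<tau>. \<eta> ^ i) * (\<Sum>k<T. \<eta> ^ k * a k)"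
proof -
  define c where "c t k = (if k \<le> t \<and> t < k + \<tau> then \<eta> ^ t * a k else 0)" for t k
  have "\<eta> ^ t * (\<Sum>k=Suc t - \<tau>..<Suc t. a k) = (\<Sum>k<T. c t k)" if "t < T" for t
  proof -
    have "\<eta> ^ t * (\<Sum>k=Suc t - \<tau>..<Suc t. a k) = (\<Sum>k\<in>{Suc t - \<tau>..<Suc t}. c t k)"
      unfolding sum_distrib_left c_def by (intro sum.cong) auto
    also have "\<dots> = (\<Sum>k<T. c t k)"
      using that by (intro sum.mono_neutral_left) (auto simp: c_def)
    finally show ?thesis .
  qed
  then have "(\<Sum>t<T. \<eta> ^ t * (\<Sum>k=Suc t - \<tau>..<Suc t. a k)) = (\<Sum>k<T. \<Sum>t<T. c t k)"
    by (simp add: sum.swap[of c])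
  also have "\<dots> \<le> (\<Sum>k<T. (\<Sum>i<\<tau>. \<eta> ^ i) * (\<eta> ^ k * a k))"
  proof (rule sum_mono)
    fix k
    have "(\<Sum>t<T. c t k) \<le> (\<Sum>t\<in>{k..<k + \<tau>}. \<eta> ^ t * a k)"
      unfolding c_def sum.inter_filter[of "{..<T}", symmetric, simplified]
      using assms by (intro sum_mono2) auto
    also have "\<dots> = (\<Sum>i<\<tau>. \<eta> ^ i) * (\<eta> ^ k * a k)"
      by (simp add: sum.shift_bounds_nat_ivl[of _ 0 k, simplified] atLeast0LessThan
          sum_distrib_right power_add mult.assoc add.commute)
    finally show "(\<Sum>t<T. c t k) \<le> (\<Sum>i<\<tau>. \<eta> ^ i) * (\<eta> ^ k * a k)" .
  qed
  also have "\<dots> = (\<Sum>i<\<tau>. \<eta> ^ i) * (\<Sum>k<T. \<eta> ^ k * a k)"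
    by (simp add: sum_distrib_left)
  finally show ?thesis .
qed

lemma linear_rate_from_delayed_descent:
  fixes \<Phi> a :: "nat \<Rightarrow> real" and \<eta> X Y Z :: real
  assumes descent: "\<And>t. \<eta> * \<Phi> (Suc t) - \<Phi> t \<le> X * a (Suc t) + Y * a t + Z * (\<Sum>k=Suc t - \<tau>..<Suc t. a k)"
    and a_nonneg: "\<And>k. a k \<ge> 0" and "\<eta> \<ge> 0" "X \<le> 0" "Z \<ge> 0"
    and Y_Z: "Y + (\<Sum>i<\<tau>. \<eta> ^ i) * Z \<le> 0"
  shows "\<eta> ^ T * \<Phi> T \<le> \<Phi> 0"
proof -
  define W where "W t = (\<Sum>k=Suc t - \<tau>..<Suc t. a k)" for t
  define G where "G = (\<Sum>k<T. \<eta> ^ k * a k)"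
  have telescoped: "\<eta> ^ T * \<Phi> T \<le> \<Phi> 0 + (\<Sum>t<T. \<eta> ^ t * (X * a (Suc t) + Y * a t + Z * W t))" for T
  proof (induction T)
    case (Suc T)
    have "\<eta> ^ Suc T * \<Phi> (Suc T) = \<eta> ^ T * (\<eta> * \<Phi> (Suc T))"
      by simp
    also have "\<dots> \<le> \<eta> ^ T * (\<Phi> T + (X * a (Suc T) + Y * a T + Z * W T))"
      using descent[of T] \<open>\<eta> \<ge> 0\<close> unfolding W_def by (intro mult_left_mono) auto
    finally have "\<eta> ^ Suc T * \<Phi> (Suc T) \<le> \<eta> ^ T * (\<Phi> T + (X * a (Suc T) + Y * a T + Z * W T))" .
    with Suc.IH show ?case
      by (simp add: algebra_simps)
  qed simp
  have "(\<Sum>t<T. \<eta> ^ t * (X * a (Suc t))) \<le> 0"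
    using assms by (intro sum_nonpos) (simp add: mult_nonneg_nonpos mult_nonpos_nonneg)
  moreover have "(\<Sum>t<T. \<eta> ^ t * (Z * W t)) \<le> Z * ((\<Sum>i<\<tau>. \<eta> ^ i) * G)"
  proof -
    have "(\<Sum>t<T. \<eta> ^ t * W t) \<le> (\<Sum>i<\<tau>. \<eta> ^ i) * G"
      unfolding W_def G_def by (rule sum_delay_window_swap[OF a_nonneg \<open>\<eta> \<ge> 0\<close>])
    then have "Z * (\<Sum>t<T. \<eta> ^ t * W t) \<le> Z * ((\<Sum>i<\<tau>. \<eta> ^ i) * G)"
      using \<open>Z \<ge> 0\<close> by (rule mult_left_mono)
    then show ?thesis
      by (simp add: sum_distrib_left algebra_simps)
  qed
  moreover have "(\<Sum>t<T. \<eta> ^ t * (Y * a t)) = Y * G"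
    by (simp add: G_def sum_distrib_left algebra_simps)
  moreover have "(Y + (\<Sum>i<\<tau>. \<eta> ^ i) * Z) * G \<le> 0"
    using Y_Z assms unfolding G_def by (intro mult_nonpos_nonneg sum_nonneg) auto
  ultimately have "(\<Sum>t<T. \<eta> ^ t * (X * a (Suc t) + Y * a t + Z * W t)) \<le> 0"
    by (simp add: sum.distrib algebra_simps)
  with telescoped[of T] show ?thesis
    by linarith
qed

lemma strongly_monotone_if_strongly_convex:
  fixes f :: "'a::real_inner \<Rightarrow> real"
  assumes "\<And>y z. f y \<ge> f z + inner (g z) (y - z) + \<mu> / 2 * (norm (y - z))\<^sup>2"
  shows "inner (g y - g z) (y - z) \<ge> \<mu> * (norm (y - z))\<^sup>2"
  using assms[of y z] assms[of z y]
  by (simp add: inner_diff_left inner_diff_right norm_minus_commute)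

lemma strong_convexity_modulus_le_lipschitz:
  fixes f :: "'a::euclidean_space \<Rightarrow> real"
  assumes "\<And>y z. f y \<ge> f z + inner (g z) (y - z) + \<mu> / 2 * (norm (y - z))\<^sup>2"
    and "\<And>y z. norm (g y - g z) \<le> L * norm (y - z)"
  shows "\<mu> \<le> L"
proof -
  obtain b :: 'a where "b \<in> Basis"
    using nonempty_Basis by blast
  then have "norm b = 1"
    by simp
  have "\<mu> * (norm (b - 0))\<^sup>2 \<le> inner (g b - g 0) (b - 0)"
    using assms(1) by (rule strongly_monotone_if_strongly_convex)
  also have "\<dots> \<le> norm (g b - g 0) * norm (b - 0)"
    by (rule norm_cauchy_schwarz)
  also have "\<dots> \<le> L * norm (b - 0) * norm (b - 0)"
    using assms(2)[of b 0] by (intro mult_right_mono) auto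
  finally show ?thesis
    using \<open>norm b = 1\<close> by simp
qed

lemma strongly_convex_average:
  fixes f :: "'i \<Rightarrow> 'a::real_inner \<Rightarrow> real"
  assumes "finite I" "I \<noteq> {}"
    and "\<And>j y z. j \<in> I \<Longrightarrow> f j y \<ge> f j z + inner (g j z) (y - z) + \<mu> / 2 * (norm (y - z))\<^sup>2"
  shows "1 / card I * (\<Sum>j\<in>I. f j y) \<ge>
    1 / card I * (\<Sum>j\<in>I. f j z) + inner ((1 / card I) *\<^sub>R (\<Sum>j\<in>I. g j z)) (y - z) + \<mu> / 2 * (norm (y - z))\<^sup>2"
proof -
  have "(\<Sum>j\<in>I. f j z) + inner (\<Sum>j\<in>I. g j z) (y - z) + card I * (\<mu> / 2 * (norm (y - z))\<^sup>2)
      \<le> (\<Sum>j\<in>I. f j y)"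
    using sum_mono[of I "\<lambda>j. f j z + inner (g j z) (y - z) + \<mu> / 2 * (norm (y - z))\<^sup>2" "\<lambda>j. f j y"] assms(3)
    by (simp add: sum.distrib inner_sum_left)
  then have "1 / card I * ((\<Sum>j\<in>I. f j z) + inner (\<Sum>j\<in>I. g j z) (y - z) + card I * (\<mu> / 2 * (norm (y - z))\<^sup>2))
      \<le> 1 / card I * (\<Sum>j\<in>I. f j y)"
    by (intro mult_left_mono) auto
  with assms(1,2) show ?thesis
    by (simp add: distrib_left)
qed

lemma subdiff_real_of_ereal_ge:
  assumes "v \<in> subdiff h x" "h y \<noteq> \<infinity>" "\<And>y. h y \<noteq> -\<infinity>"
  shows "real_of_ereal (h y) \<ge> real_of_ereal (h x) + inner v (y - x)"
proof -
  have "h x \<noteq> \<infinity>" "h y \<ge> h x + ereal (inner v (y - x))"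
    using assms(1) by (auto simp: subdiff_def)
  with assms(2) assms(3)[of y] assms(3)[of x] show ?thesis
    by (cases "h x"; cases "h y") auto
qed

lemma delayed_gradient_error_bounds:
  fixes g :: "'i \<Rightarrow> 'a::real_inner \<Rightarrow> 'a" and G :: "'a \<Rightarrow> 'a"
  assumes "finite I" "I \<noteq> {}" "L \<ge> 0"
    and G_mono: "inner (G x' - G x) (x' - x) \<ge> 0"
    and G_lip: "norm (G x' - G x) \<le> L * norm (x' - x)"
    and g_lip: "\<And>j u v. j \<in> I \<Longrightarrow> norm (g j u - g j v) \<le> L * norm (u - v)"
    and near: "\<And>j. j \<in> I \<Longrightarrow> norm (y j - x') \<le> norm (x' - x) + s"
  defines "e \<equiv> G x' - G x + (1 / card I) *\<^sub>R (\<Sum>j\<in>I. g j (y j) - g j x')"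
  shows "- inner e (x' - x) \<le> L * (norm (x' - x))\<^sup>2 + L * (norm (x' - x) * s)"
    and "norm e \<le> 2 * L * norm (x' - x) + L * s"
proof -
  let ?b = "norm (x' - x)"
  have g_near: "norm (g j (y j) - g j x') \<le> L * (?b + s)" if "j \<in> I" for j
    using g_lip[OF that, of "y j" x'] near[OF that] \<open>L \<ge> 0\<close> by (meson mult_left_mono order_trans)
  have "- inner (g j (y j) - g j x') (x' - x) \<le> L * (?b + s) * ?b" if "j \<in> I" for j
  proof -
    have "- inner (g j (y j) - g j x') (x' - x) \<le> norm (g j (y j) - g j x') * ?b"
      using norm_cauchy_schwarz[of "- (g j (y j) - g j x')" "x' - x"]
      by (simp only: inner_minus_left norm_minus_cancel)
    also have "\<dots> \<le> L * (?b + s) * ?b"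
      using g_near[OF that] by (rule mult_right_mono) simp
    finally show ?thesis .
  qed
  then have "1 / card I * (\<Sum>j\<in>I. - inner (g j (y j) - g j x') (x' - x)) \<le> 1 / card I * (\<Sum>j\<in>I. L * (?b + s) * ?b)"
    by (intro mult_left_mono sum_mono) auto
  also have "\<dots> = L * (?b + s) * ?b"
    using assms(1,2) by simp
  finally have "- inner e (x' - x) \<le> L * (?b + s) * ?b"
    using G_mono by (simp add: e_def inner_add_left inner_sum_left sum_negf)
  then show "- inner e (x' - x) \<le> L * ?b\<^sup>2 + L * (?b * s)"
    by (simp add: power2_eq_square algebra_simps)
  have "norm (\<Sum>j\<in>I. g j (y j) - g j x') \<le> (\<Sum>j\<in>I. norm (g j (y j) - g j x'))"
    by (rule norm_sum)
  also have "\<dots> \<le> (\<Sum>j\<in>I. L * (?b + s))"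
    using g_near by (rule sum_mono)
  finally have "norm (\<Sum>j\<in>I. g j (y j) - g j x') \<le> card I * (L * (?b + s))"
    by simp
  then have "norm ((1 / card I) *\<^sub>R (\<Sum>j\<in>I. g j (y j) - g j x')) \<le> L * (?b + s)"
    using assms(1,2) by (simp add: field_simps card_gt_0_iff)
  with G_lip assms(1,2) norm_triangle_ineq[of "G x' - G x" "(1 / card I) *\<^sub>R (\<Sum>j\<in>I. g j (y j) - g j x')"]
  show "norm e \<le> 2 * L * ?b + L * s"
    by (simp add: e_def algebra_simps)
qed

locale edanni_parameters =
  fixes \<rho> L \<mu> c1 \<delta> \<delta>1 D \<eta> :: real and \<tau> :: nat
  assumes mu_pos: "\<mu> > 0" and mu_le_L: "\<mu> \<le> L" and rho_nonneg: "\<rho> \<ge> 0"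
    and c1_pos: "c1 > 0" and delta_pos: "\<delta> > 0"
    and delta1_gt: "\<delta>1 > (2 * L + \<rho> + 1) / \<mu>"
    and D_eq: "D = \<rho> / 2 * (1 + \<delta>1) + \<delta>1"
    and eta_eq: "\<eta> = 1 + 1 / D"
    and cond1: "(\<delta>1 * L + \<rho> / 2 * (1 + \<delta>1) + 1 / 2) / D + 3 * L / 2 - (\<rho> - 1) / 2 + L * \<delta> * real \<tau> < 0"
    and cond2: "(\<delta>1 * L + \<rho> / 2 * (1 + \<delta>1) + 1 / 2) / D + 3 * L / 2 - (\<rho> - 1) / 2 + L * \<delta> * real \<tau>
                 - (\<rho> - c1) * \<eta> / 2
                 + (L / \<delta> + (\<delta>1 / 2 * L\<^sup>2 * real \<tau>) / D) * ((\<eta> ^ \<tau> - 1) / (\<eta> - 1))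
                 + c1 * \<eta> / D < 0"
begin

text \<open>
  X, Y and Z are the coefficients in the one-step estimate one_step_bound; cond1 says exactly
  that K > 0, and cond2 is the inequality cond2_R.
\<close>

definition P where "P = (\<delta>1 * L + \<rho> / 2 * (1 + \<delta>1) + 1 / 2) / D"
definition K where "K = (\<rho> - 1) / 2 - 3 * L / 2 - L * \<delta> * real \<tau> - P"
definition Q where "Q = \<mu> * D"
definition \<theta> where "\<theta> = 1 - \<rho> / Q"
definition M where "M = 1 + 2 * K + L + L * \<delta> * real \<tau> + \<rho> / Q"
definition \<beta> where "\<beta> = \<rho> / 2 + \<mu> / 2 - \<rho> / (2 * D) - \<rho>\<^sup>2 / (2 * Q)"
definition R where "R = \<rho> * \<eta> / 2 + K"
definition X where "X = M / 2 + \<theta> * (L + L * \<delta> * real \<tau> / 2) - \<beta> + 8 * L\<^sup>2 / Q"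
definition Y where "Y = c1 * (\<theta>\<^sup>2 / (2 * M) + 3 / (2 * Q)) - \<rho> / 2"
definition Z where "Z = \<theta> * L / (2 * \<delta>) + 12 / 5 * L\<^sup>2 * real \<tau> / (2 * Q)"

lemma L_pos: "L > 0"
  using mu_pos mu_le_L by linarith

lemma mu_delta1_gt: "\<mu> * \<delta>1 > 2 * L + \<rho> + 1"
  using delta1_gt mu_pos by (simp add: pos_divide_less_eq mult.commute)

lemma delta1_ge_1: "\<delta>1 \<ge> 1"
proof (rule ccontr)
  assume "\<not> 1 \<le> \<delta>1"
  then have "\<mu> * \<delta>1 \<le> \<mu> * 1"
    using mu_pos by (intro mult_left_mono) auto
  then show False
    using mu_delta1_gt mu_le_L L_pos rho_nonneg by linarith
qed

lemma D_pos: "D > 0"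
  using D_eq delta1_ge_1 rho_nonneg by (simp add: add_nonneg_pos)

lemma eta_gt_1: "\<eta> > 1"
  using D_pos eta_eq by simp

lemma P_times_D: "P * D = \<delta>1 * L + \<rho> / 2 * (1 + \<delta>1) + 1 / 2"
  using D_pos by (simp add: P_def)

lemma P_nonneg: "P \<ge> 0"
  using L_pos delta1_ge_1 rho_nonneg D_pos unfolding P_def by simp

lemma P_mult_ge: "P * (\<rho> + 2) \<ge> \<rho>"
proof -
  have "(P * D) * (\<rho> + 2) - \<rho> * D = (\<rho> + 2) * \<delta>1 * L + 3 * \<rho> / 2 + 1"
    unfolding P_times_D by (simp add: D_eq field_simps)
  also have "\<dots> \<ge> 0"
    using delta1_ge_1 L_pos rho_nonneg by simp
  finally have "(P * (\<rho> + 2)) * D \<ge> \<rho> * D"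
    by (simp add: algebra_simps)
  then show ?thesis
    using D_pos by simp
qed

lemma K_pos: "K > 0"
  using cond1 by (simp add: K_def P_def field_simps)

lemma L_delta_tau_nonneg: "L * \<delta> * real \<tau> \<ge> 0"
  using L_pos delta_pos by simp

lemma two_K_le: "2 * K \<le> \<rho> - 1 - 2 * P"
  using L_pos L_delta_tau_nonneg unfolding K_def by (simp add: field_simps)

lemma rho_gt_2: "\<rho> > 2"
proof -
  have "\<rho> - 1 > 2 * P"
    using K_pos two_K_le by linarith
  then have "(\<rho> - 1) * (\<rho> + 2) > (2 * P) * (\<rho> + 2)"
    using rho_nonneg by (intro mult_strict_right_mono) auto
  then have "(\<rho> - 2) * (\<rho> + 1) > 0"
    using P_mult_ge by (simp add: algebra_simps)
  then show ?thesis
    using rho_nonneg by (simp add: zero_less_mult_iff)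
qed

lemma three_L_le_rho: "3 * L \<le> \<rho>"
  using K_pos P_nonneg L_delta_tau_nonneg unfolding K_def by (simp add: field_simps)

lemma two_Q_gt: "2 * Q > (\<rho> + 2) * (2 * L + \<rho> + 1)"
proof -
  have "(\<rho> + 2) * (2 * L + \<rho> + 1) < (\<rho> + 2) * (\<mu> * \<delta>1)"
    using mu_delta1_gt rho_nonneg by (intro mult_strict_left_mono) auto
  moreover have "2 * Q = \<rho> * \<mu> + (\<rho> + 2) * (\<mu> * \<delta>1)"
    unfolding Q_def by (simp add: D_eq algebra_simps)
  moreover have "\<rho> * \<mu> \<ge> 0"
    using rho_nonneg mu_pos by simp
  ultimately show ?thesis
    by linarith
qed

lemma two_Q_gt_rho: "2 * Q > (\<rho> + 2) * (\<rho> + 1)"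
proof -
  have "(\<rho> + 2) * (2 * L + \<rho> + 1) \<ge> (\<rho> + 2) * (\<rho> + 1)"
    using L_pos rho_nonneg by (intro mult_left_mono) auto
  with two_Q_gt show ?thesis
    by linarith
qed

lemma Q_pos: "Q > 0"
  using mu_pos D_pos by (simp add: Q_def)

lemma rho_lt_Q: "\<rho> < Q"
  using two_Q_gt_rho rho_nonneg by (simp add: algebra_simps) (smt (verit) zero_le_square)

lemma theta_pos: "\<theta> > 0"
  using rho_lt_Q Q_pos by (simp add: \<theta>_def)

lemma theta_le_1: "\<theta> \<le> 1"
  using rho_nonneg Q_pos by (simp add: \<theta>_def)

lemma two_K_eq: "2 * K = \<rho> - 1 - 3 * L - 2 * (L * \<delta> * real \<tau>) - 2 * P"
  by (simp add: K_def field_simps)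

lemma M_pos: "M > 0"
  using K_pos L_pos L_delta_tau_nonneg divide_nonneg_pos[OF rho_nonneg Q_pos] unfolding M_def by linarith

lemma X_nonpos: "X \<le> 0"
proof -
  have "\<theta> * (L + L * \<delta> * real \<tau> / 2) \<le> L + L * \<delta> * real \<tau> / 2"
    using theta_le_1 L_pos L_delta_tau_nonneg by (simp add: mult_left_le_one_le)
  moreover have "M / 2 = \<rho> / 2 - L - L * \<delta> * real \<tau> / 2 - P + \<rho> / (2 * Q)"
    using two_K_eq unfolding M_def by (simp add: field_simps)
  ultimately have "X \<le> - P + \<rho> / (2 * Q) - \<mu> / 2 + \<rho> / (2 * D) + \<rho>\<^sup>2 / (2 * Q) + 8 * L\<^sup>2 / Q"
    unfolding X_def \<beta>_def by linarith
  also have "\<dots> = (- \<mu> * (P * D) - \<mu> * Q / 2 + \<rho> / 2 + \<rho> * \<mu> / 2 + \<rho>\<^sup>2 / 2 + 8 * L\<^sup>2) / Q"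
    using Q_pos D_pos mu_pos unfolding Q_def by (simp add: field_simps)
  also have "\<dots> \<le> 0"
  proof -
    have "(\<mu> * \<delta>1) * (L + \<rho> / 2) \<ge> (2 * L + \<rho> + 1) * (L + \<rho> / 2)"
      using mu_delta1_gt L_pos rho_nonneg by (intro mult_right_mono) auto
    moreover have "\<mu> * (P * D) = (\<mu> * \<delta>1) * (L + \<rho> / 2) + \<rho> * \<mu> / 2 + \<mu> / 2"
      unfolding P_times_D by (simp add: algebra_simps)
    moreover have "L * (3 * L) \<le> L * \<rho>"
      using three_L_le_rho L_pos by (intro mult_left_mono) auto
    moreover have "\<mu> * Q \<ge> 0"
      using Q_pos mu_pos by simp
    moreover have "(2 * L + \<rho> + 1) * (L + \<rho> / 2) = 2 * L\<^sup>2 + 2 * (L * \<rho>) + L + \<rho>\<^sup>2 / 2 + \<rho> / 2"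
      by (simp add: field_simps power2_eq_square)
    moreover have "3 * L\<^sup>2 = L * (3 * L)"
      by (simp add: power2_eq_square)
    ultimately have "- \<mu> * (P * D) - \<mu> * Q / 2 + \<rho> / 2 + \<rho> * \<mu> / 2 + \<rho>\<^sup>2 / 2 + 8 * L\<^sup>2 \<le> 0"
      using mu_pos L_pos by linarith
    then show ?thesis
      using Q_pos by (simp add: divide_nonpos_pos)
  qed
  finally show ?thesis .
qed

lemma Z_nonneg: "Z \<ge> 0"
  using theta_pos L_pos delta_pos Q_pos by (simp add: Z_def)

lemma geometric_eta: "(\<eta> ^ \<tau> - 1) / (\<eta> - 1) = (\<Sum>i<\<tau>. \<eta> ^ i)"
  using eta_gt_1 by (simp add: geometric_sum)

lemma rho_div_Q_le: "\<rho> / Q \<le> 1 / 3" "\<rho> / Q * (\<rho> + 3) \<le> 2"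
proof -
  have "(\<rho> - 1) * (\<rho> - 2) \<ge> 0"
    using rho_gt_2 by simp
  then have "3 * \<rho> \<le> Q"
    using two_Q_gt_rho by (simp add: algebra_simps)
  then show "\<rho> / Q \<le> 1 / 3"
    using Q_pos by (simp add: divide_le_eq)
  have "\<rho> * (\<rho> + 3) \<le> 2 * Q"
    using two_Q_gt_rho by (simp add: algebra_simps)
  then show "\<rho> / Q * (\<rho> + 3) \<le> 2"
    using Q_pos by (simp add: field_simps)
qed

lemma rho_eta_ge: "\<rho> * \<eta> / 2 \<ge> \<rho> / 2"
  using eta_gt_1 rho_nonneg by (simp add: mult_le_cancel_left1 less_imp_le)

lemma R_pos: "R > 0"
  using rho_eta_ge K_pos rho_nonneg unfolding R_def by linarith

lemma K_mult_le: "3 * K * (1 + \<rho> / Q) \<le> \<rho> * \<eta> / 2 * (3 * \<rho> - 3 - \<rho> / Q * (\<rho> + 3))"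
proof -
  have "3 * K * (1 + \<rho> / Q) \<le> 3 * K * (4 / 3)"
    using K_pos rho_div_Q_le(1) by (intro mult_left_mono) auto
  moreover have "2 * (\<rho> * \<eta> / 2 * (3 * \<rho> - 3 - \<rho> / Q * (\<rho> + 3))) \<ge> \<rho> * (3 * \<rho> - 5)"
  proof -
    have "\<rho> * \<eta> / 2 * (3 * \<rho> - 3 - \<rho> / Q * (\<rho> + 3)) \<ge> \<rho> * \<eta> / 2 * (3 * \<rho> - 5)"
      using rho_div_Q_le rho_eta_ge rho_nonneg by (intro mult_left_mono) auto
    moreover have "(\<rho> * \<eta>) * (3 * \<rho> - 5) \<ge> \<rho> * (3 * \<rho> - 5)"
      using rho_eta_ge rho_gt_2 by (intro mult_right_mono) auto
    ultimately show ?thesis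
      by (simp add: algebra_simps)
  qed
  moreover have "8 * K \<le> \<rho> * (3 * \<rho> - 5)"
  proof (rule mult_right_le_imp_le)
    have "2 * K * (\<rho> + 2) \<le> (\<rho> - 1 - 2 * P) * (\<rho> + 2)"
      using two_K_le rho_nonneg by (intro mult_right_mono) auto
    then have "2 * K * (\<rho> + 2) \<le> (\<rho> - 1) * (\<rho> + 2) - 2 * \<rho>"
      using P_mult_ge by (simp add: algebra_simps)
    moreover have "3 * \<rho> * ((\<rho> - 2) * (\<rho> + 1)) \<ge> 0"
      using rho_gt_2 by simp
    ultimately show "8 * K * (\<rho> + 2) \<le> \<rho> * (3 * \<rho> - 5) * (\<rho> + 2)"
      by (simp add: algebra_simps)
    show "0 < \<rho> + 2"
      using rho_nonneg by simp
  qed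
  ultimately show ?thesis
    by linarith
qed

lemma rho_div_Q_pos: "\<rho> / Q > 0"
  using rho_gt_2 Q_pos by simp

lemma R_div_M_le: "R / M \<le> \<rho> * \<eta> / 2 / (1 + \<rho> / Q)"
proof -
  define r where "r = \<rho> / Q"
  define A where "A = \<rho> * \<eta> / 2"
  have "r > 0" "M \<ge> 1 + 2 * K + r" "R = A + K"
    using rho_div_Q_pos L_pos L_delta_tau_nonneg by (simp_all add: r_def M_def R_def A_def)
  have "R / M \<le> R / (1 + 2 * K + r)"
    using \<open>M \<ge> 1 + 2 * K + r\<close> R_pos \<open>r > 0\<close> K_pos by (intro divide_left_mono) auto
  moreover have "1 + r \<le> 2 * A"
    using rho_div_Q_le rho_eta_ge rho_gt_2 unfolding r_def A_def by linarith
  then have "K * (1 + r) \<le> K * (2 * A)"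
    using K_pos by (intro mult_left_mono) auto
  then have "R * (1 + r) \<le> A * (1 + 2 * K + r)"
    using \<open>R = A + K\<close> by (simp add: algebra_simps)
  then have "R / (1 + 2 * K + r) \<le> A / (1 + r)"
    using \<open>r > 0\<close> K_pos by (simp add: field_simps)
  ultimately show ?thesis
    unfolding r_def A_def by linarith
qed

lemma R_mult_3_div_Q_le: "R * (3 / Q) \<le> \<rho> * \<eta> / 2 / (1 + \<rho> / Q) * (\<rho> / Q * (3 - \<rho> / Q))"
proof -
  define r where "r = \<rho> / Q"
  define A where "A = \<rho> * \<eta> / 2"
  have "3 * K * (1 + r) \<le> A * (3 * \<rho> - 3 - r * (\<rho> + 3))"
    using K_mult_le unfolding r_def A_def .
  moreover have "3 * R * (1 + r) - \<rho> * A * (3 - r) = 3 * K * (1 + r) - A * (3 * \<rho> - 3 - r * (\<rho> + 3))"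
    by (simp add: R_def A_def field_simps)
  ultimately have "3 * R * (1 + r) \<le> \<rho> * A * (3 - r)"
    by linarith
  have "R * (3 / Q) = 3 * R * r / \<rho>"
    using rho_gt_2 Q_pos unfolding r_def by (simp add: field_simps)
  also have "\<dots> = (3 * R * (1 + r)) * r / (\<rho> * (1 + r))"
    using nonzero_mult_divide_mult_cancel_right[of "1 + r" "3 * R * r" \<rho>] rho_div_Q_pos
    by (simp add: r_def ac_simps)
  also have "\<dots> \<le> (\<rho> * A * (3 - r)) * r / (\<rho> * (1 + r))"
    using \<open>3 * R * (1 + r) \<le> \<rho> * A * (3 - r)\<close> rho_div_Q_pos rho_gt_2
    by (intro divide_right_mono mult_right_mono) (auto simp: r_def)
  also have "\<dots> = A * (3 - r) * r / (1 + r)"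
    using nonzero_mult_divide_mult_cancel_left[of \<rho> "A * (3 - r) * r" "1 + r"] rho_gt_2
    by (simp add: ac_simps)
  also have "\<dots> = A / (1 + r) * (r * (3 - r))"
    by (simp add: ac_simps)
  finally show ?thesis
    unfolding r_def A_def .
qed

lemma R_mult_le: "R * (\<theta>\<^sup>2 / M + 3 / Q) \<le> \<rho> * \<eta> / 2"
proof -
  define r where "r = \<rho> / Q"
  define A where "A = \<rho> * \<eta> / 2"
  have "R * (\<theta>\<^sup>2 / M + 3 / Q) = R / M * (1 - r)\<^sup>2 + R * (3 / Q)"
    by (simp add: \<theta>_def r_def algebra_simps)
  also have "\<dots> \<le> A / (1 + r) * (1 - r)\<^sup>2 + A / (1 + r) * (r * (3 - r))"
    using R_div_M_le R_mult_3_div_Q_le unfolding r_def A_def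
    by (intro add_mono mult_right_mono) auto
  also have "\<dots> = A / (1 + r) * ((1 - r)\<^sup>2 + r * (3 - r))"
    by (simp only: distrib_left)
  also have "(1 - r)\<^sup>2 + r * (3 - r) = 1 + r"
    by (simp add: power2_eq_square algebra_simps)
  also have "A / (1 + r) * (1 + r) = A"
    using rho_div_Q_pos by (simp add: r_def)
  finally show ?thesis
    unfolding A_def .
qed

lemma R_le: "R \<le> \<rho> - 1 / 2 - \<rho> * \<delta>1 / (2 * D)"
proof -
  have "P = \<rho> * \<delta>1 / (2 * D) + (\<delta>1 * L + \<rho> / 2 + 1 / 2) / D"
    using D_pos by (simp add: P_def field_simps)
  moreover have "(\<delta>1 * L + \<rho> / 2 + 1 / 2) / D \<ge> \<rho> / (2 * D)"
    using D_pos delta1_ge_1 L_pos by (simp add: divide_right_mono field_simps)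
  moreover have "\<rho> * \<eta> / 2 = \<rho> / 2 + \<rho> / (2 * D)"
    using D_pos by (simp add: eta_eq field_simps)
  ultimately show ?thesis
    using two_K_le unfolding R_def by linarith
qed

lemma theta_mult_R_le: "\<theta> * R \<le> \<rho>"
proof -
  have "\<theta> * R \<le> R"
    using theta_le_1 theta_pos R_pos by (intro mult_left_le_one_le) auto
  moreover have "\<rho> * \<delta>1 / (2 * D) \<ge> 0"
    using rho_nonneg delta1_ge_1 D_pos by simp
  ultimately show ?thesis
    using R_le by linarith
qed

lemma R_le_mu_delta1: "24 * R \<le> 5 * \<rho> * (\<mu> * \<delta>1)"
proof -
  have "\<rho> * \<delta>1 / (2 * D) \<ge> \<rho> / (2 * \<rho> + 2)"
  proof -
    have "1 * (\<rho> * \<rho>) \<le> \<delta>1 * (\<rho> * \<rho>)"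
      using delta1_ge_1 by (intro mult_right_mono) auto
    then have "\<rho> * (2 * D) \<le> \<rho> * \<delta>1 * (2 * \<rho> + 2)"
      by (simp add: D_eq algebra_simps)
    then show ?thesis
      using D_pos rho_nonneg by (simp add: field_simps)
  qed
  moreover have "24 * \<rho> - 12 - 24 * (\<rho> / (2 * \<rho> + 2)) \<le> 5 * \<rho> * (\<rho> + 1)"
  proof -
    have "\<rho>\<^sup>2 \<ge> 2 * \<rho>"
      using rho_gt_2 by (simp add: power2_eq_square)
    then have "(\<rho> - 2) * (10 * \<rho>\<^sup>2 - 8 * \<rho> - 6) \<ge> 0"
      using rho_gt_2 by simp
    then have "24 * ((\<rho> - 1 / 2) * (2 * \<rho> + 2) - \<rho>) \<le> 5 * \<rho> * (\<rho> + 1) * (2 * \<rho> + 2)"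
      by (simp add: algebra_simps power2_eq_square power3_eq_cube)
    then show ?thesis
      using rho_nonneg by (simp add: field_simps)
  qed
  ultimately have "24 * R \<le> 5 * \<rho> * (\<rho> + 1)"
    using R_le by linarith
  also have "\<dots> \<le> 5 * \<rho> * (\<mu> * \<delta>1)"
    using mu_delta1_gt L_pos rho_nonneg by (intro mult_left_mono) auto
  finally show ?thesis .
qed

lemma cond2_R:
  "c1 * \<eta> * (1 / 2 + 1 / D) + (\<Sum>i<\<tau>. \<eta> ^ i) * (L / \<delta> + \<delta>1 / 2 * L\<^sup>2 * real \<tau> / D) < R"
proof -
  have "(\<delta>1 * L + \<rho> / 2 * (1 + \<delta>1) + 1 / 2) / D = P"
    by (simp add: P_def)
  moreover have "(\<rho> - c1) * \<eta> / 2 = \<rho> * \<eta> / 2 - c1 * \<eta> / 2" "(\<rho> - 1) / 2 = \<rho> / 2 - 1 / 2"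
    "c1 * \<eta> * (1 / 2 + 1 / D) = c1 * \<eta> / 2 + c1 * \<eta> / D"
    "(L / \<delta> + \<delta>1 / 2 * L\<^sup>2 * real \<tau> / D) * (\<Sum>i<\<tau>. \<eta> ^ i) = (\<Sum>i<\<tau>. \<eta> ^ i) * (L / \<delta> + \<delta>1 / 2 * L\<^sup>2 * real \<tau> / D)"
    by (simp_all add: algebra_simps diff_divide_distrib)
  ultimately show ?thesis
    using cond2 unfolding geometric_eta R_def K_def by linarith
qed

lemma Y_Z_nonpos: "Y + (\<Sum>i<\<tau>. \<eta> ^ i) * Z \<le> 0"
proof -
  define S where "S = (\<Sum>i<\<tau>. \<eta> ^ i)"
  define W where "W = L / \<delta> + \<delta>1 / 2 * L\<^sup>2 * real \<tau> / D"
  have "S \<ge> 0"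
    unfolding S_def using eta_gt_1 by (intro sum_nonneg) auto
  have "(\<theta>\<^sup>2 / (2 * M) + 3 / (2 * Q)) * R \<le> \<eta> * (1 / 2 + 1 / D) * \<rho> / 2"
  proof -
    have "(\<theta>\<^sup>2 / (2 * M) + 3 / (2 * Q)) * R = R * (\<theta>\<^sup>2 / M + 3 / Q) / 2"
      by (simp add: field_simps)
    also have "\<dots> \<le> (\<rho> * \<eta> / 2) / 2"
      using R_mult_le by (rule divide_right_mono) simp
    also have "\<dots> \<le> \<eta> * (1 / 2 + 1 / D) * \<rho> / 2"
      using D_pos eta_gt_1 rho_nonneg by (simp add: field_simps)
    finally show ?thesis .
  qed
  then have "c1 * (\<theta>\<^sup>2 / (2 * M) + 3 / (2 * Q)) * R \<le> c1 * (\<eta> * (1 / 2 + 1 / D) * \<rho> / 2)"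
    using c1_pos by (simp add: mult.assoc mult_left_mono)
  moreover have "Z * R \<le> W * \<rho> / 2"
  proof -
    have "\<theta> * L / (2 * \<delta>) * R \<le> L / \<delta> * \<rho> / 2"
      using theta_mult_R_le L_pos delta_pos by (simp add: field_simps mult_left_mono)
    moreover have "12 / 5 * L\<^sup>2 * real \<tau> / (2 * Q) * R \<le> \<delta>1 / 2 * L\<^sup>2 * real \<tau> / D * \<rho> / 2"
    proof -
      have "24 * R * (L\<^sup>2 * real \<tau>) \<le> 5 * \<rho> * (\<mu> * \<delta>1) * (L\<^sup>2 * real \<tau>)"
        using R_le_mu_delta1 by (rule mult_right_mono) simp
      then show ?thesis
        using mu_pos D_pos unfolding Q_def by (simp add: field_simps)
    qed
    ultimately show ?thesis
      unfolding Z_def W_def by (simp add: field_simps)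
  qed
  then have "S * (Z * R) \<le> S * (W * \<rho> / 2)"
    using \<open>S \<ge> 0\<close> by (rule mult_left_mono)
  moreover have "(c1 * \<eta> * (1 / 2 + 1 / D) + S * W - R) * \<rho> \<le> 0"
    using cond2_R rho_nonneg unfolding S_def W_def by (simp add: mult_nonpos_nonneg)
  ultimately have "(Y + S * Z) * R \<le> 0"
    unfolding Y_def by (simp add: algebra_simps)
  then show ?thesis
    using R_pos unfolding S_def by (simp add: mult_le_0_iff)
qed

(* Here p and p' stand for Psi(x^(t+1)) - Psi(xstar) and Psi(x^t) - Psi(xstar), d = x^(t+1) - x^t,
   u = x^(t+1) - xstar, and z - rho d is the subgradient of Psi at x^(t+1); the hypotheses are strong
   convexity of Psi evaluated at x^t and at xstar. *)
lemma descent_combination: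
  fixes z d u :: "'a::real_inner"
  assumes descent: "p \<le> p' + inner (z - \<rho> *\<^sub>R d) d - \<mu> / 2 * (norm d)\<^sup>2"
    and gap: "p \<le> inner (z - \<rho> *\<^sub>R d) u - \<mu> / 2 * (norm u)\<^sup>2"
  shows "\<eta> * (p + \<rho> / 2 * (norm d)\<^sup>2) - p' \<le> \<theta> * inner z d + (norm z)\<^sup>2 / (2 * Q) - \<beta> * (norm d)\<^sup>2"
proof -
  define w where "w = z - \<rho> *\<^sub>R d"
  define a where "a = (norm d)\<^sup>2"
  have w_d: "inner w d = inner z d - \<rho> * a"
    by (simp add: w_def a_def inner_diff_left power2_norm_eq_inner)
  have w_sq: "(norm w)\<^sup>2 = (norm z)\<^sup>2 - 2 * \<rho> * inner z d + \<rho>\<^sup>2 * a"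
    unfolding w_def a_def power2_norm_eq_inner
    by (simp add: inner_diff_left inner_diff_right inner_commute power2_eq_square algebra_simps)
  have "inner w u \<le> norm w * norm u"
    by (rule norm_cauchy_schwarz)
  also have "\<dots> \<le> (1 / \<mu>) / 2 * (norm w)\<^sup>2 + (norm u)\<^sup>2 / (2 * (1 / \<mu>))"
    using mu_pos by (intro mult_le_weighted_squares) simp
  also have "\<dots> = (norm w)\<^sup>2 / (2 * \<mu>) + \<mu> / 2 * (norm u)\<^sup>2"
    by (simp add: ac_simps)
  finally have "inner w u \<le> (norm w)\<^sup>2 / (2 * \<mu>) + \<mu> / 2 * (norm u)\<^sup>2" .
  with gap have "p \<le> (norm w)\<^sup>2 / (2 * \<mu>)"
    unfolding w_def by linarith
  then have "1 / D * (p + \<rho> / 2 * a) \<le> 1 / D * (((norm z)\<^sup>2 - 2 * \<rho> * inner z d + \<rho>\<^sup>2 * a) / (2 * \<mu>) + \<rho> / 2 * a)"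
    using D_pos unfolding w_sq by (intro mult_left_mono) auto
  moreover have "p - p' \<le> inner z d - \<rho> * a - \<mu> / 2 * a"
    using descent w_d unfolding w_def a_def by linarith
  moreover have "\<eta> * (p + \<rho> / 2 * a) - p' = (p - p') + \<rho> / 2 * a + 1 / D * (p + \<rho> / 2 * a)"
    by (simp add: eta_eq algebra_simps)
  ultimately have "\<eta> * (p + \<rho> / 2 * a) - p' \<le>
      (inner z d - \<rho> * a - \<mu> / 2 * a) + \<rho> / 2 * a
      + 1 / D * (((norm z)\<^sup>2 - 2 * \<rho> * inner z d + \<rho>\<^sup>2 * a) / (2 * \<mu>) + \<rho> / 2 * a)"
    by (simp only:)
  also have "\<dots> = \<theta> * inner z d + (norm z)\<^sup>2 / (2 * Q) - \<beta> * a"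
    using mu_pos D_pos by (simp add: \<theta>_def \<beta>_def Q_def field_simps power2_eq_square)
  finally show ?thesis
    unfolding a_def .
qed

lemma inner_error_bound:
  fixes \<epsilon> e d :: "'a::real_inner" and S s :: real
  assumes e_d: "- inner e d \<le> L * (norm d)\<^sup>2 + L * (norm d * s)"
    and d_s: "norm d * s \<le> \<tau> * \<delta> / 2 * (norm d)\<^sup>2 + S / (2 * \<delta>)"
  shows "\<theta> * inner (\<epsilon> - e) d \<le>
    \<theta>\<^sup>2 * (norm \<epsilon>)\<^sup>2 / (2 * M) + (M / 2 + \<theta> * (L + L * \<delta> * \<tau> / 2)) * (norm d)\<^sup>2 + \<theta> * L / (2 * \<delta>) * S"
proof -
  have "inner (\<epsilon> - e) d \<le> norm \<epsilon> * norm d + L * (norm d)\<^sup>2 + L * (\<tau> * \<delta> / 2 * (norm d)\<^sup>2 + S / (2 * \<delta>))"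
    using norm_cauchy_schwarz[of \<epsilon> d] e_d mult_left_mono[OF d_s less_imp_le[OF L_pos]]
    by (simp add: inner_diff_left)
  then have "\<theta> * inner (\<epsilon> - e) d \<le>
      \<theta> * (norm \<epsilon> * norm d + L * (norm d)\<^sup>2 + L * (\<tau> * \<delta> / 2 * (norm d)\<^sup>2 + S / (2 * \<delta>)))"
    using theta_pos by (intro mult_left_mono) auto
  also have "\<dots> = (\<theta> * norm \<epsilon>) * norm d + \<theta> * (L + L * \<delta> * \<tau> / 2) * (norm d)\<^sup>2 + \<theta> * L / (2 * \<delta>) * S"
    by (simp add: algebra_simps)
  also have "(\<theta> * norm \<epsilon>) * norm d \<le> \<theta>\<^sup>2 * (norm \<epsilon>)\<^sup>2 / (2 * M) + M / 2 * (norm d)\<^sup>2"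
    using mult_le_weighted_squares[of "1 / M" "\<theta> * norm \<epsilon>" "norm d"] M_pos
    by (simp add: field_simps power_mult_distrib)
  finally show ?thesis
    by (simp add: algebra_simps)
qed

lemma norm_error_bound:
  fixes \<epsilon> e d :: "'a::real_normed_vector" and S s :: real
  assumes e_bound: "norm e \<le> 2 * L * norm d + L * s" and "s \<ge> 0" and s_sq: "s\<^sup>2 \<le> \<tau> * S"
  shows "(norm (\<epsilon> - e))\<^sup>2 / (2 * Q) \<le>
    3 * (norm \<epsilon>)\<^sup>2 / (2 * Q) + 8 * L\<^sup>2 * (norm d)\<^sup>2 / Q + 12 / 5 * L\<^sup>2 * \<tau> * S / (2 * Q)"
proof -
  have "(norm (\<epsilon> - e))\<^sup>2 \<le> (norm \<epsilon> + norm e)\<^sup>2"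
    by (intro power_mono norm_triangle_ineq4) simp
  also have "\<dots> \<le> 3 * (norm \<epsilon>)\<^sup>2 + 3 / 2 * (norm e)\<^sup>2"
    using power2_add_le_weighted[of 2 "norm \<epsilon>" "norm e"] by simp
  finally have "(norm (\<epsilon> - e))\<^sup>2 \<le> 3 * (norm \<epsilon>)\<^sup>2 + 3 / 2 * (norm e)\<^sup>2" .
  moreover have "(norm e)\<^sup>2 \<le> 32 / 3 * L\<^sup>2 * (norm d)\<^sup>2 + 8 / 5 * L\<^sup>2 * (\<tau> * S)"
  proof -
    have "(norm e)\<^sup>2 \<le> (2 * L * norm d + L * s)\<^sup>2"
      using e_bound by (intro power_mono) auto
    also have "\<dots> \<le> (1 + 5 / 3) * (2 * L * norm d)\<^sup>2 + (1 + 1 / (5 / 3)) * (L * s)\<^sup>2"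
      by (rule power2_add_le_weighted) simp
    also have "\<dots> = 32 / 3 * L\<^sup>2 * (norm d)\<^sup>2 + 8 / 5 * L\<^sup>2 * s\<^sup>2"
      by (simp add: power_mult_distrib)
    also have "\<dots> \<le> 32 / 3 * L\<^sup>2 * (norm d)\<^sup>2 + 8 / 5 * L\<^sup>2 * (\<tau> * S)"
      using s_sq by (intro add_left_mono mult_left_mono) auto
    finally show ?thesis .
  qed
  ultimately have "(norm (\<epsilon> - e))\<^sup>2 \<le> 3 * (norm \<epsilon>)\<^sup>2 + 16 * L\<^sup>2 * (norm d)\<^sup>2 + 12 / 5 * L\<^sup>2 * (\<tau> * S)"
    by linarith
  then show ?thesis
    using Q_pos by (simp add: field_simps)
qed

lemma one_step_bound:
  fixes \<epsilon> e d u :: "'a::real_inner" and S s :: real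
  assumes descent: "p \<le> p' + inner (\<epsilon> - e - \<rho> *\<^sub>R d) d - \<mu> / 2 * (norm d)\<^sup>2"
    and gap: "p \<le> inner (\<epsilon> - e - \<rho> *\<^sub>R d) u - \<mu> / 2 * (norm u)\<^sup>2"
    and eps_bound: "(norm \<epsilon>)\<^sup>2 \<le> c1 * a'"
    and e_d: "- inner e d \<le> L * (norm d)\<^sup>2 + L * (norm d * s)"
    and e_bound: "norm e \<le> 2 * L * norm d + L * s"
    and "s \<ge> 0" and s_sq: "s\<^sup>2 \<le> \<tau> * S"
    and d_s: "norm d * s \<le> \<tau> * \<delta> / 2 * (norm d)\<^sup>2 + S / (2 * \<delta>)"
  shows "\<eta> * (p + \<rho> / 2 * (norm d)\<^sup>2) - (p' + \<rho> / 2 * a') \<le> X * (norm d)\<^sup>2 + Y * a' + Z * S"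
proof -
  have "\<eta> * (p + \<rho> / 2 * (norm d)\<^sup>2) - p' \<le> \<theta> * inner (\<epsilon> - e) d + (norm (\<epsilon> - e))\<^sup>2 / (2 * Q) - \<beta> * (norm d)\<^sup>2"
    using descent_combination[of p p' "\<epsilon> - e" d u] descent gap by simp
  moreover have "(\<theta>\<^sup>2 / (2 * M) + 3 / (2 * Q)) * (norm \<epsilon>)\<^sup>2 \<le> (\<theta>\<^sup>2 / (2 * M) + 3 / (2 * Q)) * (c1 * a')"
    using eps_bound M_pos Q_pos by (intro mult_left_mono) auto
  ultimately show ?thesis
    using inner_error_bound[OF e_d d_s, of \<epsilon>] norm_error_bound[OF e_bound \<open>s \<ge> 0\<close> s_sq, of \<epsilon>]
    unfolding X_def Y_def Z_def by (simp add: field_simps)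
qed

end

locale inexact_edanni = edanni_parameters \<rho> L \<mu> c1 \<delta> \<delta>1 D \<eta> \<tau>
  for \<rho> L \<mu> c1 \<delta> \<delta>1 D \<eta> :: real and \<tau> :: nat +
  fixes m :: nat and Lj :: "nat \<Rightarrow> 'a::euclidean_space \<Rightarrow> real" and gL :: "nat \<Rightarrow> 'a \<Rightarrow> 'a"
    and h :: "'a \<Rightarrow> ereal" and x eps :: "nat \<Rightarrow> 'a" and A :: "nat \<Rightarrow> nat set" and xstar :: 'a
  assumes m_pos: "m \<ge> 1"
    and h_not_minf: "\<And>y. h y \<noteq> -\<infinity>"
    and xstar_min: "\<And>y. ereal (1 / real m * (\<Sum>j=1..m. Lj j xstar)) + h xstar
                        \<le> ereal (1 / real m * (\<Sum>j=1..m. Lj j y)) + h y"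
    and iteration: "\<And>t. eps t - (gL 1 (x (t + 1)) + (1 / real m) *\<^sub>R (\<Sum>j=1..m. gL j (x (tlast A j t)))
                          - gL 1 (x (tlast A 1 t)) + \<rho> *\<^sub>R (x (t + 1) - x t)) \<in> subdiff h (x (t + 1))"
    and bounded_delay: "\<And>i t. i \<in> {1..m} \<Longrightarrow> \<exists>s. t - \<tau> \<le> s \<and> s \<le> t \<and> i \<in> A s"
    and lipschitz: "\<And>j y z. j \<in> {1..m} \<Longrightarrow> norm (gL j y - gL j z) \<le> L * norm (y - z)"
    and strongly_convex: "\<And>j y z. j \<in> {1..m} \<Longrightarrow>
                            Lj j y \<ge> Lj j z + inner (gL j z) (y - z) + \<mu> / 2 * (norm (y - z))\<^sup>2"
    and eps_bound: "\<And>t. (norm (eps (Suc t)))\<^sup>2 \<le> c1 * (norm (x (Suc t) - x t))\<^sup>2"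
begin

definition f where "f y = 1 / real m * (\<Sum>j=1..m. Lj j y)"
definition H where "H y = real_of_ereal (h y)"
definition grad_error where
  "grad_error t = gL 1 (x (t + 1)) - gL 1 (x t) + (1 / real m) *\<^sub>R (\<Sum>j=1..m. gL j (x (tlast A j t)) - gL j (x (t + 1)))"
definition \<Phi> where
  "\<Phi> t = f (x (t + 1)) + H (x (t + 1)) + \<rho> / 2 * (norm (x (t + 1) - x t))\<^sup>2 - (f xstar + H xstar)"

lemma tlast_master: "tlast A 1 t = t"
  by (simp add: tlast_def)

lemma tlast_window:
  assumes "j \<in> {1..m}"
  shows "t - \<tau> \<le> tlast A j t \<and> tlast A j t \<le> t"
proof (cases "j = 1")
  case False
  obtain s where s: "t - \<tau> \<le> s" "s \<le> t" "j \<in> A s"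
    using bounded_delay[OF assms] by blast
  let ?P = "\<lambda>s. s \<le> t \<and> j \<in> A s"
  have "?P (Greatest ?P)"
    by (rule GreatestI_nat[of ?P s t]) (use s in auto)
  moreover have "s \<le> Greatest ?P"
    by (rule Greatest_le_nat[of ?P s t]) (use s in auto)
  ultimately show ?thesis
    using False s by (simp add: tlast_def)
qed (simp add: tlast_def)

lemma h_iterate_finite: "h (x (Suc t)) = ereal (H (x (Suc t)))"
proof -
  have "h (x (Suc t)) \<noteq> \<infinity>"
    using iteration[of t] by (simp add: subdiff_def)
  then show ?thesis
    using h_not_minf[of "x (Suc t)"] unfolding H_def by (cases "h (x (Suc t))") simp_all
qed

lemma h_xstar_finite: "h xstar = ereal (H xstar)"
proof -
  have "h xstar \<noteq> \<infinity>"
  proof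
    assume "h xstar = \<infinity>"
    then show False
      using xstar_min[of "x (Suc 0)"] h_iterate_finite[of 0] by simp
  qed
  then show ?thesis
    using h_not_minf[of xstar] unfolding H_def by (cases "h xstar") simp_all
qed

lemma objective_ge_subgradient:
  assumes "h y \<noteq> \<infinity>"
  shows "f y + H y \<ge> f (x (t + 1)) + H (x (t + 1))
    + inner (eps t - grad_error t - \<rho> *\<^sub>R (x (t + 1) - x t)) (y - x (t + 1)) + \<mu> / 2 * (norm (y - x (t + 1)))\<^sup>2"
proof -
  define v where "v = eps t - (gL 1 (x (t + 1)) + (1 / real m) *\<^sub>R (\<Sum>j=1..m. gL j (x (tlast A j t)))
                          - gL 1 (x (tlast A 1 t)) + \<rho> *\<^sub>R (x (t + 1) - x t))"
  have "H y \<ge> H (x (t + 1)) + inner v (y - x (t + 1))"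
    unfolding H_def v_def using iteration assms h_not_minf by (rule subdiff_real_of_ereal_ge)
  moreover have "f y \<ge> f (x (t + 1)) + inner ((1 / real m) *\<^sub>R (\<Sum>j=1..m. gL j (x (t + 1)))) (y - x (t + 1))
      + \<mu> / 2 * (norm (y - x (t + 1)))\<^sup>2"
    using strongly_convex_average[where I="{1..m}" and y=y and z="x (t + 1)"] strongly_convex m_pos
    by (simp add: f_def)
  moreover have "v + (1 / real m) *\<^sub>R (\<Sum>j=1..m. gL j (x (t + 1))) = eps t - grad_error t - \<rho> *\<^sub>R (x (t + 1) - x t)"
    unfolding v_def grad_error_def sum_subtractf scaleR_diff_right tlast_master by (simp add: algebra_simps)
  then have "inner (eps t - grad_error t - \<rho> *\<^sub>R (x (t + 1) - x t)) (y - x (t + 1))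
      = inner v (y - x (t + 1)) + inner ((1 / real m) *\<^sub>R (\<Sum>j=1..m. gL j (x (t + 1)))) (y - x (t + 1))"
    by (metis inner_add_left)
  ultimately show ?thesis
    by linarith
qed

lemma stale_iterate_near:
  assumes "j \<in> {1..m}"
  shows "norm (x (tlast A j t) - x (t + 1)) \<le> norm (x (t + 1) - x t) + (\<Sum>k=t - \<tau>..<t. norm (x (Suc k) - x k))"
proof -
  have "t - \<tau> \<le> tlast A j t" "tlast A j t \<le> t"
    using tlast_window[OF assms] by auto
  then have "norm (x (Suc t) - x (tlast A j t)) \<le> (\<Sum>k=tlast A j t..<Suc t. norm (x (Suc k) - x k))"
    by (intro norm_diff_le_sum_increments) simp
  also have "\<dots> = (\<Sum>k=tlast A j t..<t. norm (x (Suc k) - x k)) + norm (x (t + 1) - x t)"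
    using \<open>tlast A j t \<le> t\<close> by simp
  also have "(\<Sum>k=tlast A j t..<t. norm (x (Suc k) - x k)) \<le> (\<Sum>k=t - \<tau>..<t. norm (x (Suc k) - x k))"
    using \<open>t - \<tau> \<le> tlast A j t\<close> by (intro sum_mono2) auto
  finally show ?thesis
    by (simp add: norm_minus_commute)
qed

lemma grad_error_bounds:
  fixes t :: nat
  defines "s \<equiv> (\<Sum>k=t - \<tau>..<t. norm (x (Suc k) - x k))"
  shows "- inner (grad_error t) (x (t + 1) - x t) \<le> L * (norm (x (t + 1) - x t))\<^sup>2 + L * (norm (x (t + 1) - x t) * s)"
    and "norm (grad_error t) \<le> 2 * L * norm (x (t + 1) - x t) + L * s"
proof -
  have "1 \<in> {1..m}"
    using m_pos by simp
  have "inner (gL 1 (x (t + 1)) - gL 1 (x t)) (x (t + 1) - x t) \<ge> \<mu> * (norm (x (t + 1) - x t))\<^sup>2"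
    by (rule strongly_monotone_if_strongly_convex[OF strongly_convex[OF \<open>1 \<in> {1..m}\<close>]])
  moreover have "\<mu> * (norm (x (t + 1) - x t))\<^sup>2 \<ge> 0"
    using mu_pos by simp
  ultimately have "inner (gL 1 (x (t + 1)) - gL 1 (x t)) (x (t + 1) - x t) \<ge> 0"
    by linarith
  note bounds = delayed_gradient_error_bounds[where I="{1..m}" and g=gL and G="gL 1" and y="\<lambda>j. x (tlast A j t)",
      OF _ _ _ this lipschitz[OF \<open>1 \<in> {1..m}\<close>] lipschitz stale_iterate_near]
  show "- inner (grad_error t) (x (t + 1) - x t) \<le> L * (norm (x (t + 1) - x t))\<^sup>2 + L * (norm (x (t + 1) - x t) * s)"
    using bounds(1) m_pos L_pos unfolding grad_error_def s_def by simp
  show "norm (grad_error t) \<le> 2 * L * norm (x (t + 1) - x t) + L * s"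
    using bounds(2) m_pos L_pos unfolding grad_error_def s_def by simp
qed

lemma Phi_nonneg: "\<Phi> t \<ge> 0"
proof -
  have "f xstar + H xstar \<le> f (x (Suc t)) + H (x (Suc t))"
    using xstar_min[of "x (Suc t)"] h_xstar_finite h_iterate_finite[of t] by (simp add: f_def)
  moreover have "\<rho> / 2 * (norm (x (Suc t) - x t))\<^sup>2 \<ge> 0"
    using rho_nonneg by simp
  ultimately show ?thesis
    by (simp add: \<Phi>_def)
qed

lemma lyapunov_step:
  fixes t :: nat
  defines "a \<equiv> \<lambda>k. (norm (x (Suc k) - x k))\<^sup>2"
  shows "\<eta> * \<Phi> (Suc t) - \<Phi> t \<le> X * a (Suc t) + Y * a t + Z * (\<Sum>k=Suc t - \<tau>..<Suc t. a k)"
proof -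
  define x' where "x' = x (Suc (Suc t))"
  define w where "w = eps (Suc t) - grad_error (Suc t) - \<rho> *\<^sub>R (x' - x (Suc t))"
  define \<Psi>' where "\<Psi>' = f x' + H x' - (f xstar + H xstar)"
  define s where "s = (\<Sum>k=Suc t - \<tau>..<Suc t. norm (x (Suc k) - x k))"
  have "f (x (Suc t)) + H (x (Suc t)) \<ge> f x' + H x' + inner w (x (Suc t) - x') + \<mu> / 2 * (norm (x (Suc t) - x'))\<^sup>2"
    using objective_ge_subgradient[of "x (Suc t)" "Suc t"] h_iterate_finite[of t] by (simp add: x'_def w_def)
  then have descent: "\<Psi>' \<le> \<Phi> t - \<rho> / 2 * a t + inner w (x' - x (Suc t)) - \<mu> / 2 * (norm (x' - x (Suc t)))\<^sup>2"
    unfolding \<Psi>'_def \<Phi>_def a_def by (simp add: inner_diff_right norm_minus_commute)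
  have "f xstar + H xstar \<ge> f x' + H x' + inner w (xstar - x') + \<mu> / 2 * (norm (xstar - x'))\<^sup>2"
    using objective_ge_subgradient[of xstar "Suc t"] h_xstar_finite by (simp add: x'_def w_def)
  then have gap: "\<Psi>' \<le> inner w (x' - xstar) - \<mu> / 2 * (norm (x' - xstar))\<^sup>2"
    unfolding \<Psi>'_def by (simp add: inner_diff_right norm_minus_commute)
  have "(norm (x' - x (Suc t)))\<^sup>2 = a (Suc t)" "\<Phi> (Suc t) = \<Psi>' + \<rho> / 2 * a (Suc t)"
    by (simp_all add: a_def x'_def \<Psi>'_def \<Phi>_def)
  moreover have "\<eta> * (\<Psi>' + \<rho> / 2 * (norm (x' - x (Suc t)))\<^sup>2) - (\<Phi> t - \<rho> / 2 * a t + \<rho> / 2 * a t)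
      \<le> X * (norm (x' - x (Suc t)))\<^sup>2 + Y * a t + Z * (\<Sum>k=Suc t - \<tau>..<Suc t. a k)"
  proof (rule one_step_bound[OF descent[unfolded w_def] gap[unfolded w_def]])
    show "(norm (eps (Suc t)))\<^sup>2 \<le> c1 * a t"
      unfolding a_def by (rule eps_bound)
    show "- inner (grad_error (Suc t)) (x' - x (Suc t)) \<le> L * (norm (x' - x (Suc t)))\<^sup>2 + L * (norm (x' - x (Suc t)) * s)"
      "norm (grad_error (Suc t)) \<le> 2 * L * norm (x' - x (Suc t)) + L * s"
      using grad_error_bounds[of "Suc t"] by (simp_all add: x'_def s_def)
    show "s \<ge> 0"
      unfolding s_def by (simp add: sum_nonneg)
    show "s\<^sup>2 \<le> \<tau> * (\<Sum>k=Suc t - \<tau>..<Suc t. a k)"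
      unfolding s_def a_def by (rule sum_delay_window_squared_le)
    show "norm (x' - x (Suc t)) * s \<le> \<tau> * \<delta> / 2 * (norm (x' - x (Suc t)))\<^sup>2 + (\<Sum>k=Suc t - \<tau>..<Suc t. a k) / (2 * \<delta>)"
      unfolding s_def a_def using delta_pos by (rule mult_sum_delay_window_le)
  qed
  ultimately show ?thesis
    by simp
qed

lemma Phi_decay: "\<Phi> t \<le> \<Phi> 0 / \<eta> ^ t"
proof -
  have "\<eta> ^ t * \<Phi> t \<le> \<Phi> 0"
    using lyapunov_step X_nonpos Z_nonneg Y_Z_nonpos eta_gt_1
    by (intro linear_rate_from_delayed_descent[where a="\<lambda>k. (norm (x (Suc k) - x k))\<^sup>2"]) auto
  then show ?thesis
    using eta_gt_1 by (simp add: field_simps)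
qed

end

theorem corollary2:
  fixes m n :: nat
    and l :: "nat \<Rightarrow> nat \<Rightarrow> 'a::euclidean_space \<Rightarrow> real"
    and h :: "'a \<Rightarrow> ereal"
    and Lj :: "nat \<Rightarrow> 'a \<Rightarrow> real"
    and gL :: "nat \<Rightarrow> 'a \<Rightarrow> 'a"
    and F :: "'a \<Rightarrow> 'a \<Rightarrow> ereal"
    and xstar :: 'a
    and x eps :: "nat \<Rightarrow> 'a"
    and A :: "nat \<Rightarrow> nat set"
    and \<rho> L \<sigma> c1 \<delta> \<delta>1 D \<eta> :: real
    and \<tau> :: nat
  assumes m2: "m \<ge> 2" and n1: "n \<ge> 1"
    and l_smooth: "\<forall>j\<in>{1..m}. \<forall>i\<in>{1..n}. smooth_fun (l j i)"
    and h_proper: "proper_fun h" and h_lsc: "lsc_fun h" and h_convex: "convex_fun h"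
    and Lj_def: "\<forall>j y. Lj j y = (1 / real n) * (\<Sum>i=1..n. l j i y)"
    and xstar_min: "\<forall>y. ereal ((1 / real m) * (\<Sum>j=1..m. Lj j xstar)) + h xstar
                        \<le> ereal ((1 / real m) * (\<Sum>j=1..m. Lj j y)) + h y"
    and F_def: "\<forall>y z. F y z = ereal ((1 / real m) * (\<Sum>j=1..m. Lj j y) + \<rho> / 2 * (norm (y - z))\<^sup>2) + h y"
    and rho: "\<rho> \<ge> 0"
    and A_sub: "\<forall>t. A t \<subseteq> {1..m}" and A0: "A 0 = {1..m}"
    and iter: "\<forall>t. eps t - (gL 1 (x (t + 1))
                          + (1 / real m) *\<^sub>R (\<Sum>j=1..m. gL j (x (tlast A j t)))
                          - gL 1 (x (tlast A 1 t))
                          + \<rho> *\<^sub>R (x (t + 1) - x t)) \<in> subdiff h (x (t + 1))"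
    and A1: "\<forall>i\<in>{1..m}. \<forall>t. \<exists>s. t - \<tau> \<le> s \<and> s \<le> t \<and> i \<in> A s"
    and A2_grad: "\<forall>j\<in>{1..m}. \<forall>y. GDERIV (Lj j) y :> gL j y"
    and A2_lip: "\<forall>j\<in>{1..m}. \<forall>y z. norm (gL j y - gL j z) \<le> L * norm (y - z)"
    and A3: "\<sigma>\<^sup>2 > 0"
    and A3_sc: "\<forall>j\<in>{1..m}. \<forall>y z. Lj j y \<ge> Lj j z + inner (gL j z) (y - z) + \<sigma>\<^sup>2 / 2 * (norm (y - z))\<^sup>2"
    and A5: "c1 > 0" "\<forall>t>0. (norm (eps t))\<^sup>2 < c1 * (norm (x t - x (t - 1)))\<^sup>2"
    and delta: "\<delta> > 0" and delta1: "\<delta>1 > (2 * L + \<rho> + 1) / \<sigma>\<^sup>2"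
    and D_def: "D = \<rho> / 2 * (1 + \<delta>1) + \<delta>1"
    and eta_def: "\<eta> = 1 + 1 / D"
    and cond1: "(\<delta>1 * L + \<rho> / 2 * (1 + \<delta>1) + 1 / 2) / D + 3 * L / 2 - (\<rho> - 1) / 2 + L * \<delta> * real \<tau> < 0"
    and cond2: "(\<delta>1 * L + \<rho> / 2 * (1 + \<delta>1) + 1 / 2) / D + 3 * L / 2 - (\<rho> - 1) / 2 + L * \<delta> * real \<tau>
                 - (\<rho> - c1) * \<eta> / 2
                 + (L / \<delta> + (\<delta>1 / 2 * L\<^sup>2 * real \<tau>) / D) * ((\<eta> ^ \<tau> - 1) / (\<eta> - 1))
                 + c1 * \<eta> / D < 0"
  shows "\<forall>t. 0 \<le> F (x (t + 1)) (x t) - F xstar xstar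
             \<and> F (x (t + 1)) (x t) - F xstar xstar \<le> ereal (1 / \<eta> ^ t) * (F (x 1) (x 0) - F xstar xstar)"
proof -
  have "\<sigma>\<^sup>2 \<le> L"
    by (rule strong_convexity_modulus_le_lipschitz[of "Lj 1" "gL 1"]) (use A3_sc A2_lip m2 in auto)
  interpret edanni: inexact_edanni \<rho> L "\<sigma>\<^sup>2" c1 \<delta> \<delta>1 D \<eta> \<tau> m Lj gL h x eps A xstar
  proof unfold_locales
    show "1 \<le> m"
      using m2 by simp
    show "h y \<noteq> -\<infinity>" for y
      using h_proper by (simp add: proper_fun_def)
    show "(norm (eps (Suc t)))\<^sup>2 \<le> c1 * (norm (x (Suc t) - x t))\<^sup>2" for t
      using A5(2)[rule_format, of "Suc t"] by simp
  qed (fact A3 \<open>\<sigma>\<^sup>2 \<le> L\<close> rho A5(1) delta delta1 D_def eta_def cond1 cond2 xstar_min[rule_format]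
      iter[rule_format] A1[rule_format] A2_lip[rule_format] A3_sc[rule_format])+
  have gap_eq: "F (x (Suc t)) (x t) - F xstar xstar = ereal (edanni.\<Phi> t)" for t
    using edanni.h_iterate_finite[of t] edanni.h_xstar_finite
    by (simp add: F_def edanni.\<Phi>_def edanni.f_def)
  show ?thesis
    using edanni.Phi_nonneg edanni.Phi_decay by (simp add: gap_eq[of 0, simplified] gap_eq)
qed

end
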